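(* Let $p$ be an odd prime and let $R$ be a local nearring whose additive group is $G_1=\langle a\rangle+\langle b\rangle+\langle c\rangle$ with $ap=bp=cp=0$, $a+b=b+a+c$, $c$ central, where $a$ is the identity element of $R$, $c=-a-b+a+b$, and the subgroup $L$ of non-invertible elements equals $\langle b\rangle+\langle c\rangle$. Write elements as $x=ax_1+bx_2+cx_3$ ($0\le x_i<p$) and define $\alpha,\beta,\gamma\colon R\to\mathbb Z_p$ by $xb=a\alpha(x)+b\beta(x)+c\gamma(x)$. Then for $x,y\in R$, $$x\cdot y=ax_1y_1+b(x_2y_1+\beta(x)y_2)+c\Big(-x_1x_2\tbinom{y_1}{2}+x_3y_1+\gamma(x)y_2+x_1\beta(x)y_3\Big),$$ and moreover: (0) $\alpha(0)\equiv\beta(0)\equiv\gamma(0)\equiv0\pmod p$ if and only if $R$ is zero-symmetric; (1) $\alpha(x)\equiv 0\pmod p$ for all $x$; (2) if $\beta(x)\equiv0\pmod p$ then $x_1\equiv0\pmod p$; (3) $\beta(xy)\equiv\beta(x)\beta(y)\pmod p$; (4) $\gamma(xy)\equiv\gamma(x)\beta(y)+x_1\beta(x)\gamma(y)\pmod p$.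
   Context: A (left) nearring is a set $R$ with operations $+,\cdot$ such that $(R,+)$ is a group with neutral element $0$, $(R,\cdot)$ is a semigroup, and $x(y+z)=xy+xz$ for all $x,y,z$. A nearring with identity (i.e. $(R,\cdot)$ a monoid) is local if the set $L$ of its non-invertible elements is a subgroup of $(R,+)$. $R$ is zero-symmetric if $0\cdot x=0$ for all $x$. Additive notation: $gk$ is $g$ added $k$ times. *)

theory Defs
  imports "HOL-Algebra.Group" "HOL-Number_Theory.Cong"
begin

text \<open>A (left) nearring: the additive group is given as an HOL-Algebra group A
(written multiplicatively there: the group operation of A is the nearring addition,
its unit is the nearring zero), and m is the nearring multiplication.\<close>

definition nearring :: "('r, 'z) monoid_scheme \<Rightarrow> ('r \<Rightarrow> 'r \<Rightarrow> 'r) \<Rightarrow> bool" where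
  "nearring A m \<longleftrightarrow> group A
     \<and> (\<forall>x\<in>carrier A. \<forall>y\<in>carrier A. m x y \<in> carrier A)
     \<and> (\<forall>x\<in>carrier A. \<forall>y\<in>carrier A. \<forall>z\<in>carrier A. m (m x y) z = m x (m y z))
     \<and> (\<forall>x\<in>carrier A. \<forall>y\<in>carrier A. \<forall>z\<in>carrier A.
          m x (y \<otimes>\<^bsub>A\<^esub> z) = m x y \<otimes>\<^bsub>A\<^esub> m x z)"

definition is_mult_identity :: "('r, 'z) monoid_scheme \<Rightarrow> ('r \<Rightarrow> 'r \<Rightarrow> 'r) \<Rightarrow> 'r \<Rightarrow> bool" where
  "is_mult_identity A m e \<longleftrightarrow> e \<in> carrier A \<and> (\<forall>x\<in>carrier A. m e x = x \<and> m x e = x)"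

definition nonunits :: "('r, 'z) monoid_scheme \<Rightarrow> ('r \<Rightarrow> 'r \<Rightarrow> 'r) \<Rightarrow> 'r \<Rightarrow> 'r set" where
  "nonunits A m e = {x \<in> carrier A. \<not> (\<exists>y\<in>carrier A. m x y = e \<and> m y x = e)}"

definition local_nearring :: "('r, 'z) monoid_scheme \<Rightarrow> ('r \<Rightarrow> 'r \<Rightarrow> 'r) \<Rightarrow> 'r \<Rightarrow> bool" where
  "local_nearring A m e \<longleftrightarrow> nearring A m \<and> is_mult_identity A m e
     \<and> subgroup (nonunits A m e) A"

definition zero_symmetric :: "('r, 'z) monoid_scheme \<Rightarrow> ('r \<Rightarrow> 'r \<Rightarrow> 'r) \<Rightarrow> bool" where
  "zero_symmetric A m \<longleftrightarrow> (\<forall>x\<in>carrier A. m \<one>\<^bsub>A\<^esub> x = \<one>\<^bsub>A\<^esub>)"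

definition coords :: "('r, 'z) monoid_scheme \<Rightarrow> 'r \<Rightarrow> 'r \<Rightarrow> 'r \<Rightarrow> int \<Rightarrow> 'r \<Rightarrow> int \<times> int \<times> int" where
  "coords A a b c p x = (THE (k1, k2, k3). 0 \<le> k1 \<and> k1 < p \<and> 0 \<le> k2 \<and> k2 < p \<and> 0 \<le> k3 \<and> k3 < p
      \<and> x = a [^]\<^bsub>A\<^esub> k1 \<otimes>\<^bsub>A\<^esub> b [^]\<^bsub>A\<^esub> k2 \<otimes>\<^bsub>A\<^esub> c [^]\<^bsub>A\<^esub> k3)"

definition coord1 where "coord1 A a b c p x = fst (coords A a b c p x)"
definition coord2 where "coord2 A a b c p x = fst (snd (coords A a b c p x))"
definition coord3 where "coord3 A a b c p x = snd (snd (coords A a b c p x))"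

end

theory Submission
  imports Defs "HOL-Algebra.Multiplicative_Group"
begin

text \<open>Writing the additive group multiplicatively, it is the Heisenberg group of order p^3:
  a^i b^j c^k times a^i' b^j' c^k' equals a^(i+i') b^(j+j') c^(k+k'-j i').  Left distributivity
  makes y \<mapsto> x y an endomorphism of this group, so x y is determined by x a = x, x b and x c.
  Since b lies in the subgroup L of non-units and a one-sided inverse in a finite nearring is
  two-sided, x b is again a non-unit, so its a-coordinate \<alpha>(x) vanishes; and x c, the image
  of the commutator of a and b, is the commutator of x and x b, namely c^(x1 \<beta>(x)).  Expanding
  x (a^y1 b^y2 c^y3) gives the multiplication formula, and comparing the coordinates of
  (x y) b = x (y b) gives the multiplicativity of \<beta> and the rule for \<gamma>.  If \<beta>(x) = 0 then
  x c = 0, so x cannot be a unit and x1 = 0.\<close>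

lemma (in group) int_pow_cong:
  assumes "g \<in> carrier G" "g [^] (n::int) = \<one>" "[i = j] (mod n)"
  shows "g [^] i = g [^] j"
proof -
  have "int (ord g) dvd n" using assms(1,2) int_pow_eq_id by blast
  moreover have "n dvd j - i" using assms(3) by (simp add: cong_iff_dvd_diff dvd_diff_commute)
  ultimately show ?thesis using assms(1) int_pow_eq dvd_trans by blast
qed

lemma (in group) conj_int_pow:
  assumes "g \<in> carrier G" "x \<in> carrier G"
  shows "g \<otimes> x [^] (i::int) \<otimes> inv g = (g \<otimes> x \<otimes> inv g) [^] i"
proof -
  have "(\<lambda>y. g \<otimes> y \<otimes> inv g) \<in> hom G G"
    using assms(1) by (auto simp: hom_def m_assoc inv_solve_left)
  then show ?thesis using hom_int_pow[of _ G G x i] assms(2) is_group by simp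
qed

lemma (in group) central_int_pow_commute:
  assumes "c \<in> carrier G" "x \<in> carrier G" "\<forall>y\<in>carrier G. c \<otimes> y = y \<otimes> c"
  shows "c [^] (k::int) \<otimes> x = x \<otimes> c [^] k"
proof -
  have "x \<otimes> c \<otimes> inv x = c"
    using assms by (metis inv_solve_right m_closed)
  then have "x \<otimes> c [^] k \<otimes> inv x = c [^] k"
    using conj_int_pow[of x c k] assms(1,2) by simp
  then show ?thesis using assms(1,2) by (metis int_pow_closed inv_solve_right m_closed)
qed

locale heisenberg_generators = group A for A :: "('r, 'z) monoid_scheme" (structure) +
  fixes a b c :: 'r
  assumes generators_closed: "a \<in> carrier A" "b \<in> carrier A" "c \<in> carrier A"
    and central: "\<forall>x\<in>carrier A. c \<otimes> x = x \<otimes> c"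
    and commutation: "a \<otimes> b = b \<otimes> a \<otimes> c"
begin

lemma c_pow_commute: "x \<in> carrier A \<Longrightarrow> c [^] (k::int) \<otimes> x = x \<otimes> c [^] k"
  using central_int_pow_commute generators_closed(3) central by blast

lemma pow_b_mult_a: "b [^] (j::int) \<otimes> a = a \<otimes> b [^] j \<otimes> c [^] (- j)"
proof -
  note abc = generators_closed
  have "b \<otimes> a = a \<otimes> (b \<otimes> inv c)"
    using abc commutation by (simp add: inv_solve_right flip: m_assoc)
  then have "inv a \<otimes> b \<otimes> inv (inv a) = b \<otimes> inv c"
    using abc by (simp add: m_assoc inv_solve_left')
  then have "inv a \<otimes> b [^] j \<otimes> a = (b \<otimes> inv c) [^] j"
    using conj_int_pow[of "inv a" b j] abc by simp
  also have "\<dots> = b [^] j \<otimes> c [^] (- j)"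
  proof -
    have "b \<otimes> inv c = inv c \<otimes> b"
      using c_pow_commute[of b "- 1"] abc by (simp add: int_pow_neg)
    from int_pow_mult_distrib[OF this] show ?thesis
      using abc by (simp add: int_pow_inv int_pow_neg)
  qed
  finally show ?thesis
    using abc by (simp add: m_assoc inv_solve_left')
qed

lemma pow_b_mult_pow_a: "b [^] (j::int) \<otimes> a [^] (i::int) = a [^] i \<otimes> b [^] j \<otimes> c [^] (- (j * i))"
proof -
  note abc = generators_closed
  have "b [^] j \<otimes> a \<otimes> inv (b [^] j) = a \<otimes> (c [^] (- j) \<otimes> b [^] j \<otimes> inv (b [^] j))"
    using abc c_pow_commute[of "b [^] j" "- j"] by (simp add: pow_b_mult_a m_assoc)
  also have "\<dots> = a \<otimes> c [^] (- j)"
    using abc by (simp add: m_assoc)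
  finally have "b [^] j \<otimes> a [^] i \<otimes> inv (b [^] j) = (a \<otimes> c [^] (- j)) [^] i"
    using conj_int_pow[of "b [^] j" a i] abc by simp
  also have "\<dots> = a [^] i \<otimes> c [^] (- (j * i))"
    using abc c_pow_commute[of a "- j"] by (simp add: int_pow_mult_distrib int_pow_pow)
  finally have "b [^] j \<otimes> a [^] i = a [^] i \<otimes> c [^] (- (j * i)) \<otimes> b [^] j"
    using abc by (simp add: inv_solve_right')
  then show ?thesis
    using abc c_pow_commute[of "b [^] j" "- (j * i)"] by (simp add: m_assoc)
qed

definition heis :: "int \<Rightarrow> int \<Rightarrow> int \<Rightarrow> 'r" where
  "heis i j k = a [^] i \<otimes> b [^] j \<otimes> c [^] k"

lemma heis_closed [simp]: "heis i j k \<in> carrier A"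
  using generators_closed by (simp add: heis_def)

lemma heis_zero: "heis 0 0 0 = \<one>"
  using generators_closed by (simp add: heis_def)

lemma heis_c_pow: "heis 0 0 k = c [^] k"
  using generators_closed by (simp add: heis_def)

lemma heis_mult: "heis i j k \<otimes> heis i' j' k' = heis (i + i') (j + j') (k + k' - j * i')"
proof -
  note abc = generators_closed
  have "heis i j k \<otimes> heis i' j' k' = a [^] i \<otimes> (b [^] j \<otimes> a [^] i') \<otimes> b [^] j' \<otimes> (c [^] k' \<otimes> c [^] k)"
    using abc c_pow_commute[of "a [^] i' \<otimes> b [^] j' \<otimes> c [^] k'" k]
    by (simp add: heis_def m_assoc)
  also have "\<dots> = a [^] i \<otimes> a [^] i' \<otimes> (b [^] j \<otimes> b [^] j') \<otimes> (c [^] (- (j * i')) \<otimes> (c [^] k' \<otimes> c [^] k))"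
    using abc c_pow_commute[of "b [^] j'" "- (j * i')"] by (simp add: pow_b_mult_pow_a m_assoc)
  also have "\<dots> = heis (i + i') (j + j') (k + k' - j * i')"
    using abc by (simp add: heis_def int_pow_mult[symmetric] algebra_simps)
  finally show ?thesis .
qed

lemma heis_nat_pow:
  "heis i j k [^] (n::nat) = heis (int n * i) (int n * j) (int n * k - i * j * int (n choose 2))"
proof (induction n)
  case 0
  then show ?case by (simp add: heis_zero numeral_2_eq_2)
next
  case (Suc n)
  have "heis i j k [^] Suc n = heis i j k [^] n \<otimes> heis i j k"
    by simp
  also have "\<dots> = heis (int (Suc n) * i) (int (Suc n) * j) (int (Suc n) * k - i * j * int (Suc n choose 2))"
    by (simp add: Suc heis_mult numeral_2_eq_2 algebra_simps)
  finally show ?case .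
qed

lemma heis_0_int_pow: "heis 0 j k [^] (i::int) = heis 0 (j * i) (k * i)"
proof -
  have "(b [^] j \<otimes> c [^] k) [^] i = (b [^] j) [^] i \<otimes> (c [^] k) [^] i"
    using generators_closed c_pow_commute[of "b [^] j" k] by (simp add: int_pow_mult_distrib)
  then show ?thesis
    using generators_closed by (simp add: heis_def int_pow_pow)
qed

lemma heis_commutator:
  "inv (heis i j k) \<otimes> inv (heis i' j' k') \<otimes> heis i j k \<otimes> heis i' j' k' = c [^] (i * j' - j * i')"
proof -
  have "heis i j k \<otimes> heis i' j' k' = heis i' j' k' \<otimes> heis i j k \<otimes> c [^] (i * j' - j * i')"
    by (simp add: heis_mult flip: heis_c_pow) (simp add: algebra_simps)
  then show ?thesis
    using generators_closed by (simp add: m_assoc inv_mult_group inv_solve_left')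
qed

end

locale heisenberg_coordinates = heisenberg_generators +
  fixes p :: int
  assumes p_gt_1: "p > 1"
    and generators_order: "a [^] p = \<one>" "b [^] p = \<one>" "c [^] p = \<one>"
    and generated: "carrier A = {a [^] k1 \<otimes> b [^] k2 \<otimes> c [^] k3 | k1 k2 k3 :: int.
                 0 \<le> k1 \<and> k1 < p \<and> 0 \<le> k2 \<and> k2 < p \<and> 0 \<le> k3 \<and> k3 < p}"
    and unique: "\<And>k1 k2 k3 l1 l2 l3 :: int.
                 0 \<le> k1 \<Longrightarrow> k1 < p \<Longrightarrow> 0 \<le> k2 \<Longrightarrow> k2 < p \<Longrightarrow> 0 \<le> k3 \<Longrightarrow> k3 < p \<Longrightarrow>
                 0 \<le> l1 \<Longrightarrow> l1 < p \<Longrightarrow> 0 \<le> l2 \<Longrightarrow> l2 < p \<Longrightarrow> 0 \<le> l3 \<Longrightarrow> l3 < p \<Longrightarrow>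
                 a [^] k1 \<otimes> b [^] k2 \<otimes> c [^] k3 = a [^] l1 \<otimes> b [^] l2 \<otimes> c [^] l3 \<Longrightarrow>
                 k1 = l1 \<and> k2 = l2 \<and> k3 = l3"
begin

abbreviation "x1 \<equiv> coord1 A a b c p"
abbreviation "x2 \<equiv> coord2 A a b c p"
abbreviation "x3 \<equiv> coord3 A a b c p"

lemma heis_cong:
  "[i = i'] (mod p) \<Longrightarrow> [j = j'] (mod p) \<Longrightarrow> [k = k'] (mod p) \<Longrightarrow> heis i j k = heis i' j' k'"
  using int_pow_cong[OF generators_closed(1) generators_order(1), of i i']
    int_pow_cong[OF generators_closed(2) generators_order(2), of j j']
    int_pow_cong[OF generators_closed(3) generators_order(3), of k k']
  by (simp add: heis_def)

lemma coords_canonical: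
  assumes "0 \<le> k1" "k1 < p" "0 \<le> k2" "k2 < p" "0 \<le> k3" "k3 < p"
  shows "coords A a b c p (heis k1 k2 k3) = (k1, k2, k3)"
  unfolding coords_def
proof (rule the_equality)
  fix t
  assume t: "case t of (l1, l2, l3) \<Rightarrow> 0 \<le> l1 \<and> l1 < p \<and> 0 \<le> l2 \<and> l2 < p \<and> 0 \<le> l3 \<and> l3 < p
      \<and> heis k1 k2 k3 = a [^] l1 \<otimes> b [^] l2 \<otimes> c [^] l3"
  obtain l1 l2 l3 where l: "t = (l1, l2, l3)"
    by (cases t)
  show "t = (k1, k2, k3)"
    using t unique[of k1 k2 k3 l1 l2 l3] assms unfolding l heis_def by auto
qed (use assms in \<open>simp add: heis_def\<close>)

lemma coords_heis: "coords A a b c p (heis i j k) = (i mod p, j mod p, k mod p)"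
proof -
  have "heis i j k = heis (i mod p) (j mod p) (k mod p)"
    by (rule heis_cong) simp_all
  then show ?thesis
    using coords_canonical p_gt_1 by simp
qed

lemma heis_coords:
  assumes "x \<in> carrier A"
  shows "x = heis (x1 x) (x2 x) (x3 x)"
    and "0 \<le> x1 x" "x1 x < p" "0 \<le> x2 x" "x2 x < p" "0 \<le> x3 x" "x3 x < p"
proof -
  obtain k1 k2 k3 where k: "0 \<le> k1" "k1 < p" "0 \<le> k2" "k2 < p" "0 \<le> k3" "k3 < p"
    and x: "x = heis k1 k2 k3"
    using assms generated unfolding heis_def by blast
  then have "coords A a b c p x = (k1, k2, k3)"
    using coords_canonical by blast
  then show "x = heis (x1 x) (x2 x) (x3 x)"
    and "0 \<le> x1 x" "x1 x < p" "0 \<le> x2 x" "x2 x < p" "0 \<le> x3 x" "x3 x < p"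
    using k x unfolding coord1_def coord2_def coord3_def by simp_all
qed

lemma coords_zero: "x1 \<one> = 0" "x2 \<one> = 0" "x3 \<one> = 0"
  using coords_heis[of 0 0 0] unfolding heis_zero coord1_def coord2_def coord3_def by simp_all

lemma finite_carrier: "finite (carrier A)"
proof -
  have "carrier A \<subseteq> (\<lambda>(i, j, k). heis i j k) ` ({0..<p} \<times> {0..<p} \<times> {0..<p})"
  proof
    fix x
    assume "x \<in> carrier A"
    then show "x \<in> (\<lambda>(i, j, k). heis i j k) ` ({0..<p} \<times> {0..<p} \<times> {0..<p})"
      using heis_coords[of x] by (intro image_eqI[where x = "(x1 x, x2 x, x3 x)"]) auto
  qed
  then show ?thesis
    by (rule finite_subset) simp
qed

lemma c_ne_one: "c \<noteq> \<one>"
proof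
  assume "c = \<one>"
  then have "heis 0 0 1 = heis 0 0 0"
    using heis_c_pow[of 1] heis_zero generators_closed(3) by (metis int_pow_1)
  then have "coords A a b c p (heis 0 0 1) = coords A a b c p (heis 0 0 0)"
    by (rule arg_cong)
  then show False
    using p_gt_1 by (simp add: coords_heis)
qed

end

locale left_nearring = group A for A :: "('r, 'z) monoid_scheme" (structure) +
  fixes m :: "'r \<Rightarrow> 'r \<Rightarrow> 'r"
  assumes nearring: "nearring A m"
begin

lemma mult_closed [simp]: "x \<in> carrier A \<Longrightarrow> y \<in> carrier A \<Longrightarrow> m x y \<in> carrier A"
  using nearring unfolding nearring_def by blast

lemma mult_assoc:
  "x \<in> carrier A \<Longrightarrow> y \<in> carrier A \<Longrightarrow> z \<in> carrier A \<Longrightarrow> m (m x y) z = m x (m y z)"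
  using nearring unfolding nearring_def by blast

lemma group_hom_left_mult: "x \<in> carrier A \<Longrightarrow> group_hom A A (m x)"
  using nearring is_group
  unfolding nearring_def group_hom_def group_hom_axioms_def hom_def by (auto simp: Pi_def)

lemma mult_zero_right [simp]: "x \<in> carrier A \<Longrightarrow> m x \<one> = \<one>"
  by (rule group_hom.hom_one[OF group_hom_left_mult])

lemma mult_distrib_left:
  "x \<in> carrier A \<Longrightarrow> y \<in> carrier A \<Longrightarrow> z \<in> carrier A \<Longrightarrow> m x (y \<otimes> z) = m x y \<otimes> m x z"
  by (rule group_hom.hom_mult[OF group_hom_left_mult])

lemma mult_inv_right: "x \<in> carrier A \<Longrightarrow> y \<in> carrier A \<Longrightarrow> m x (inv y) = inv (m x y)"
  by (rule group_hom.hom_inv[OF group_hom_left_mult])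

lemma mult_int_pow_right: "x \<in> carrier A \<Longrightarrow> y \<in> carrier A \<Longrightarrow> m x (y [^] (i::int)) = m x y [^] i"
  by (rule group_hom.hom_int_pow[OF group_hom_left_mult])

end

locale nearring_with_identity = left_nearring +
  fixes e
  assumes identity: "is_mult_identity A m e"
begin

lemma identity_closed: "e \<in> carrier A"
  using identity unfolding is_mult_identity_def by blast

lemma mult_identity_left [simp]: "x \<in> carrier A \<Longrightarrow> m e x = x"
  and mult_identity_right [simp]: "x \<in> carrier A \<Longrightarrow> m x e = x"
  using identity unfolding is_mult_identity_def by auto

text \<open>In a finite nearring left multiplication by a left invertible element is injective,
  hence surjective, so the element also has a right inverse.\<close>

lemma left_invertible_imp_unit:
  assumes "finite (carrier A)" and u: "u \<in> carrier A" and v: "v \<in> carrier A" "m v u = e"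
  shows "u \<notin> nonunits A m e"
proof -
  have "inj_on (m u) (carrier A)"
  proof (rule inj_onI)
    fix z z'
    assume z: "z \<in> carrier A" "z' \<in> carrier A" "m u z = m u z'"
    then show "z = z'"
      using mult_assoc[OF v(1) u] v(2) by (metis mult_identity_left)
  qed
  then have "m u ` carrier A = carrier A"
    using endo_inj_surj[OF assms(1)] u by (simp add: image_subset_iff)
  then obtain w where w: "w \<in> carrier A" "m u w = e"
    using identity_closed by (metis imageE)
  have "v = w"
    using mult_assoc[OF v(1) u w(1)] v w identity_closed by simp
  then show ?thesis
    using u v w unfolding nonunits_def by blast
qed

lemma mult_nonunit_right:
  assumes "finite (carrier A)" and x: "x \<in> carrier A" and u: "u \<in> nonunits A m e"
  shows "m x u \<in> nonunits A m e"
proof (rule ccontr)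
  have u_carrier: "u \<in> carrier A"
    using u unfolding nonunits_def by blast
  assume "m x u \<notin> nonunits A m e"
  then obtain v where v: "v \<in> carrier A" "m v (m x u) = e"
    using x u_carrier unfolding nonunits_def by auto
  then have "m (m v x) u = e"
    using mult_assoc x u_carrier by simp
  then show False
    using left_invertible_imp_unit[OF assms(1) u_carrier mult_closed[OF v(1) x]] u by simp
qed

lemma unit_mult_eq_zero:
  assumes x: "x \<in> carrier A" "x \<notin> nonunits A m e" and z: "z \<in> carrier A" "m x z = \<one>"
  shows "z = \<one>"
proof -
  obtain y where y: "y \<in> carrier A" "m y x = e"
    using x unfolding nonunits_def by blast
  have "z = m (m y x) z"
    using y z by simp
  also have "\<dots> = \<one>"
    using mult_assoc[OF y(1) x(1) z(1)] y z by simp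
  finally show ?thesis .
qed

end

locale heisenberg_local_nearring =
  heisenberg_coordinates A a b c p + nearring_with_identity A m a
  for A :: "('r, 'z) monoid_scheme" (structure) and a b c :: 'r and p :: int and m +
  assumes c_commutator: "c = inv a \<otimes> inv b \<otimes> a \<otimes> b"
    and nonunits_eq: "nonunits A m a = {b [^] k2 \<otimes> c [^] k3 | k2 k3 :: int.
                 0 \<le> k2 \<and> k2 < p \<and> 0 \<le> k3 \<and> k3 < p}"
begin

abbreviation \<alpha> where "\<alpha> x \<equiv> x1 (m x b)"
abbreviation \<beta> where "\<beta> x \<equiv> x2 (m x b)"
abbreviation \<gamma> where "\<gamma> x \<equiv> x3 (m x b)"

lemma nonunits_eq_x1_zero: "nonunits A m a = {x \<in> carrier A. x1 x = 0}"
proof (intro Set.set_eqI iffI)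
  fix x
  assume "x \<in> nonunits A m a"
  then obtain j k where "0 \<le> j" "j < p" "0 \<le> k" "k < p" "x = heis 0 j k"
    using nonunits_eq generators_closed unfolding heis_def by auto
  then show "x \<in> {x \<in> carrier A. x1 x = 0}"
    using coords_canonical p_gt_1 unfolding coord1_def by simp
next
  fix x
  assume "x \<in> {x \<in> carrier A. x1 x = 0}"
  then have "x = b [^] x2 x \<otimes> c [^] x3 x" "0 \<le> x2 x" "x2 x < p" "0 \<le> x3 x" "x3 x < p"
    using heis_coords[of x] generators_closed by (auto simp: heis_def)
  then show "x \<in> nonunits A m a"
    unfolding nonunits_eq by blast
qed

lemma b_nonunit: "b \<in> nonunits A m a"
proof -
  have "b = heis 0 1 0"
    using generators_closed by (simp add: heis_def)
  then show ?thesis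
    unfolding nonunits_eq_x1_zero using coords_heis[of 0 1 0] generators_closed p_gt_1
    unfolding coord1_def by simp
qed

lemma alpha_eq_zero: "x \<in> carrier A \<Longrightarrow> \<alpha> x = 0"
  using mult_nonunit_right[OF finite_carrier _ b_nonunit] unfolding nonunits_eq_x1_zero by simp

lemma mult_b: "x \<in> carrier A \<Longrightarrow> m x b = heis 0 (\<beta> x) (\<gamma> x)"
  using heis_coords(1)[of "m x b"] alpha_eq_zero generators_closed by (metis mult_closed)

lemma mult_c:
  assumes "x \<in> carrier A"
  shows "m x c = c [^] (x1 x * \<beta> x)"
proof -
  have "m x c = inv x \<otimes> inv (m x b) \<otimes> x \<otimes> m x b"
    using assms generators_closed by (simp add: c_commutator mult_distrib_left mult_inv_right)
  also have "\<dots> = c [^] (x1 x * \<beta> x)"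
    using heis_commutator[of "x1 x" "x2 x" "x3 x" 0 "\<beta> x" "\<gamma> x"]
    unfolding mult_b[OF assms, symmetric] heis_coords(1)[OF assms, symmetric] by simp
  finally show ?thesis .
qed

lemma mult_heis:
  assumes x: "x \<in> carrier A" and "0 \<le> i"
  shows "m x (heis i j k) = heis (x1 x * i) (x2 x * i + \<beta> x * j)
           (- x1 x * x2 x * int (nat i choose 2) + x3 x * i + \<gamma> x * j + x1 x * \<beta> x * k)"
proof -
  have x_pow: "x [^] nat i = heis (i * x1 x) (i * x2 x) (i * x3 x - x1 x * x2 x * int (nat i choose 2))"
    using heis_nat_pow[of "x1 x" "x2 x" "x3 x" "nat i"] heis_coords(1)[OF x] \<open>0 \<le> i\<close> by simp
  have xb_pow: "m x b [^] j = heis 0 (\<beta> x * j) (\<gamma> x * j)"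
    using mult_b[OF x] heis_0_int_pow by metis
  have xc_pow: "m x c [^] k = heis 0 0 (x1 x * \<beta> x * k)"
    using mult_c[OF x] generators_closed by (simp add: heis_c_pow int_pow_pow)
  have "m x (heis i j k) = x [^] nat i \<otimes> m x b [^] j \<otimes> m x c [^] k"
    using x generators_closed \<open>0 \<le> i\<close>
    by (simp add: heis_def mult_distrib_left mult_int_pow_right flip: int_pow_int)
  then show ?thesis
    unfolding x_pow xb_pow xc_pow by (simp add: heis_mult algebra_simps)
qed

lemma mult_eq:
  assumes x: "x \<in> carrier A" and y: "y \<in> carrier A"
  shows "m x y = heis (x1 x * x1 y) (x2 x * x1 y + \<beta> x * x2 y)
           (- x1 x * x2 x * int (nat (x1 y) choose 2) + x3 x * x1 y + \<gamma> x * x2 y + x1 x * \<beta> x * x3 y)"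
proof -
  have "m x y = m x (heis (x1 y) (x2 y) (x3 y))"
    using heis_coords(1)[OF y] by (rule arg_cong)
  also have "\<dots> = heis (x1 x * x1 y) (x2 x * x1 y + \<beta> x * x2 y)
           (- x1 x * x2 x * int (nat (x1 y) choose 2) + x3 x * x1 y + \<gamma> x * x2 y + x1 x * \<beta> x * x3 y)"
    by (rule mult_heis[OF x heis_coords(2)[OF y]])
  finally show ?thesis .
qed

lemma mult_mult_b:
  assumes x: "x \<in> carrier A" and y: "y \<in> carrier A"
  shows "m (m x y) b = heis 0 (\<beta> x * \<beta> y) (\<gamma> x * \<beta> y + x1 x * \<beta> x * \<gamma> y)"
proof -
  have "m (m x y) b = m x (heis 0 (\<beta> y) (\<gamma> y))"
    using mult_assoc[OF x y] mult_b[OF y] generators_closed by simp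
  also have "\<dots> = heis 0 (\<beta> x * \<beta> y) (\<gamma> x * \<beta> y + x1 x * \<beta> x * \<gamma> y)"
    using mult_heis[OF x, of 0] by (simp add: numeral_2_eq_2)
  finally show ?thesis .
qed

lemma beta_mult:
  "x \<in> carrier A \<Longrightarrow> y \<in> carrier A \<Longrightarrow> [\<beta> (m x y) = \<beta> x * \<beta> y] (mod p)"
  using coords_heis unfolding mult_mult_b coord2_def cong_def by simp

lemma gamma_mult:
  "x \<in> carrier A \<Longrightarrow> y \<in> carrier A \<Longrightarrow> [\<gamma> (m x y) = \<gamma> x * \<beta> y + x1 x * \<beta> x * \<gamma> y] (mod p)"
  using coords_heis unfolding mult_mult_b coord3_def cong_def by simp

lemma beta_cong_zero_imp_x1_cong_zero:
  assumes x: "x \<in> carrier A" and "[\<beta> x = 0] (mod p)"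
  shows "[x1 x = 0] (mod p)"
proof -
  have "\<beta> x = 0"
    using cong_less_imp_eq_int[of "\<beta> x" p 0] heis_coords(4,5) generators_closed x assms(2) p_gt_1
    by simp
  then have "m x c = \<one>"
    using mult_c[OF x] by simp
  then have "x \<in> nonunits A m a"
    using unit_mult_eq_zero[OF x _ generators_closed(3)] c_ne_one by blast
  then show ?thesis
    unfolding nonunits_eq_x1_zero by simp
qed

lemma zero_symmetric_iff:
  "([\<alpha> \<one> = 0] (mod p) \<and> [\<beta> \<one> = 0] (mod p) \<and> [\<gamma> \<one> = 0] (mod p)) \<longleftrightarrow> zero_symmetric A m"
proof
  assume "[\<alpha> \<one> = 0] (mod p) \<and> [\<beta> \<one> = 0] (mod p) \<and> [\<gamma> \<one> = 0] (mod p)"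
  then have "\<beta> \<one> = 0" "\<gamma> \<one> = 0"
    using cong_less_imp_eq_int[of _ p 0] heis_coords(4-7) generators_closed p_gt_1 by auto
  then show "zero_symmetric A m"
    unfolding zero_symmetric_def using mult_eq[OF one_closed] by (simp add: coords_zero heis_zero)
next
  assume "zero_symmetric A m"
  then have "m \<one> b = \<one>"
    using generators_closed unfolding zero_symmetric_def by blast
  then show "[\<alpha> \<one> = 0] (mod p) \<and> [\<beta> \<one> = 0] (mod p) \<and> [\<gamma> \<one> = 0] (mod p)"
    by (simp add: coords_zero)
qed

end

theorem lemma6:
  fixes A :: "('r, 'z) monoid_scheme" and m :: "'r \<Rightarrow> 'r \<Rightarrow> 'r"
    and a b c :: 'r and p :: int
  assumes p: "prime p" "odd p"
    and R: "local_nearring A m a"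
    and abc: "a \<in> carrier A" "b \<in> carrier A" "c \<in> carrier A"
    and G1: "carrier A = {a [^]\<^bsub>A\<^esub> k1 \<otimes>\<^bsub>A\<^esub> b [^]\<^bsub>A\<^esub> k2 \<otimes>\<^bsub>A\<^esub> c [^]\<^bsub>A\<^esub> k3 | k1 k2 k3 :: int.
                 0 \<le> k1 \<and> k1 < p \<and> 0 \<le> k2 \<and> k2 < p \<and> 0 \<le> k3 \<and> k3 < p}"
    and uniq: "\<And>k1 k2 k3 l1 l2 l3 :: int.
                 0 \<le> k1 \<Longrightarrow> k1 < p \<Longrightarrow> 0 \<le> k2 \<Longrightarrow> k2 < p \<Longrightarrow> 0 \<le> k3 \<Longrightarrow> k3 < p \<Longrightarrow>
                 0 \<le> l1 \<Longrightarrow> l1 < p \<Longrightarrow> 0 \<le> l2 \<Longrightarrow> l2 < p \<Longrightarrow> 0 \<le> l3 \<Longrightarrow> l3 < p \<Longrightarrow>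
                 a [^]\<^bsub>A\<^esub> k1 \<otimes>\<^bsub>A\<^esub> b [^]\<^bsub>A\<^esub> k2 \<otimes>\<^bsub>A\<^esub> c [^]\<^bsub>A\<^esub> k3
                   = a [^]\<^bsub>A\<^esub> l1 \<otimes>\<^bsub>A\<^esub> b [^]\<^bsub>A\<^esub> l2 \<otimes>\<^bsub>A\<^esub> c [^]\<^bsub>A\<^esub> l3 \<Longrightarrow>
                 k1 = l1 \<and> k2 = l2 \<and> k3 = l3"
    and ord: "a [^]\<^bsub>A\<^esub> p = \<one>\<^bsub>A\<^esub>" "b [^]\<^bsub>A\<^esub> p = \<one>\<^bsub>A\<^esub>" "c [^]\<^bsub>A\<^esub> p = \<one>\<^bsub>A\<^esub>"
    and comm: "a \<otimes>\<^bsub>A\<^esub> b = b \<otimes>\<^bsub>A\<^esub> a \<otimes>\<^bsub>A\<^esub> c"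
    and central: "\<forall>x\<in>carrier A. c \<otimes>\<^bsub>A\<^esub> x = x \<otimes>\<^bsub>A\<^esub> c"
    and c_def: "c = inv\<^bsub>A\<^esub> a \<otimes>\<^bsub>A\<^esub> inv\<^bsub>A\<^esub> b \<otimes>\<^bsub>A\<^esub> a \<otimes>\<^bsub>A\<^esub> b"
    and L: "nonunits A m a = {b [^]\<^bsub>A\<^esub> k2 \<otimes>\<^bsub>A\<^esub> c [^]\<^bsub>A\<^esub> k3 | k2 k3 :: int.
                 0 \<le> k2 \<and> k2 < p \<and> 0 \<le> k3 \<and> k3 < p}"
  defines "x1 \<equiv> coord1 A a b c p" and "x2 \<equiv> coord2 A a b c p" and "x3 \<equiv> coord3 A a b c p"
  defines "\<alpha> \<equiv> \<lambda>x. coord1 A a b c p (m x b)"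
    and "\<beta> \<equiv> \<lambda>x. coord2 A a b c p (m x b)"
    and "\<gamma> \<equiv> \<lambda>x. coord3 A a b c p (m x b)"
  shows "(\<forall>x\<in>carrier A. \<forall>y\<in>carrier A.
            m x y = a [^]\<^bsub>A\<^esub> (x1 x * x1 y)
                    \<otimes>\<^bsub>A\<^esub> b [^]\<^bsub>A\<^esub> (x2 x * x1 y + \<beta> x * x2 y)
                    \<otimes>\<^bsub>A\<^esub> c [^]\<^bsub>A\<^esub> (- x1 x * x2 x * int (nat (x1 y) choose 2) + x3 x * x1 y
                                        + \<gamma> x * x2 y + x1 x * \<beta> x * x3 y))
       \<and> (([\<alpha> \<one>\<^bsub>A\<^esub> = 0] (mod p) \<and> [\<beta> \<one>\<^bsub>A\<^esub> = 0] (mod p) \<and> [\<gamma> \<one>\<^bsub>A\<^esub> = 0] (mod p))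
            \<longleftrightarrow> zero_symmetric A m)
       \<and> (\<forall>x\<in>carrier A. [\<alpha> x = 0] (mod p))
       \<and> (\<forall>x\<in>carrier A. [\<beta> x = 0] (mod p) \<longrightarrow> [x1 x = 0] (mod p))
       \<and> (\<forall>x\<in>carrier A. \<forall>y\<in>carrier A. [\<beta> (m x y) = \<beta> x * \<beta> y] (mod p))
       \<and> (\<forall>x\<in>carrier A. \<forall>y\<in>carrier A.
            [\<gamma> (m x y) = \<gamma> x * \<beta> y + x1 x * \<beta> x * \<gamma> y] (mod p))"
proof -
  have p_gt_1: "p > 1"
    using p(1) prime_gt_1_int by blast
  have nearring: "group A" "nearring A m" "is_mult_identity A m a"
    using R unfolding local_nearring_def nearring_def by blast+
  interpret heisenberg_local_nearring A a b c p m
    by (intro heisenberg_local_nearring.intro heisenberg_coordinates.intro heisenberg_generators.intro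
          nearring_with_identity.intro left_nearring.intro heisenberg_generators_axioms.intro
          heisenberg_coordinates_axioms.intro left_nearring_axioms.intro
          nearring_with_identity_axioms.intro heisenberg_local_nearring_axioms.intro)
       (fact p_gt_1 nearring abc G1 uniq ord comm central c_def L)+
  show ?thesis
    unfolding x1_def x2_def x3_def \<alpha>_def \<beta>_def \<gamma>_def
    by (intro conjI)
      (use mult_eq[unfolded heis_def] in blast, use zero_symmetric_iff in blast,
       use alpha_eq_zero in simp, use beta_cong_zero_imp_x1_cong_zero in blast,
       use beta_mult in blast, use gamma_mult in blast)
qed

end
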